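(* Every involutive Jamesian function is continuous on $[0,1]^2\setminus\{(0,0),(1,1)\}$.
   Context: Let $D=[0,1]^2\setminus\{(0,0),(1,1)\}$. A function $J\colon D\to\mathbb{R}$ is called Jamesian if it satisfies, for all $(a,b)\in D$: (a) $J(a,\tfrac12)=a$; (b) $J(a,0)=1$ for $0<a\le 1$; (c) $J(b,a)=1-J(a,b)$; (d) $J(1-b,1-a)=J(a,b)$; (e) $J(a,b)$ is a non-decreasing function of $a$ for each $0\le b\le 1$ and a strictly increasing function of $a$ for each $0<b<1$. A Jamesian function is called involutive if in addition $J(a,J(a,b))=b$ whenever $0<a<1$ and $0\le b\le 1$. *)

theory Defs
  imports "HOL-Analysis.Analysis"
begin

definition jdom :: "(real \<times> real) set" where
  "jdom = ({0..1} \<times> {0..1}) - {(0,0),(1,1)}"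

definition jamesian :: "(real \<Rightarrow> real \<Rightarrow> real) \<Rightarrow> bool" where
  "jamesian J \<longleftrightarrow>
     (\<forall>a b. (a,b) \<in> jdom \<longrightarrow>
        J a (1/2) = a
      \<and> (0 < a \<and> a \<le> 1 \<longrightarrow> J a 0 = 1)
      \<and> J b a = 1 - J a b
      \<and> J (1 - b) (1 - a) = J a b)
   \<and> (\<forall>b\<in>{0..1}. mono_on {a. (a,b) \<in> jdom} (\<lambda>a. J a b))
   \<and> (\<forall>b\<in>{0<..<1}. strict_mono_on {a. (a,b) \<in> jdom} (\<lambda>a. J a b))"

definition involutive_jamesian :: "(real \<Rightarrow> real \<Rightarrow> real) \<Rightarrow> bool" where
  "involutive_jamesian J \<longleftrightarrow> jamesian J \<and>
     (\<forall>a b. 0 < a \<and> a < 1 \<and> 0 \<le> b \<and> b \<le> 1 \<longrightarrow> J a (J a b) = b)"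

end

theory Submission
  imports Defs
begin

text \<open>
  For \<open>0 < a < 1\<close> the row \<open>b \<mapsto> J a b\<close> is a decreasing involution of \<open>[0,1]\<close>, so it maps
  \<open>[0,1]\<close> onto itself, and a monotone map of an interval onto an interval is continuous. The
  rows \<open>a = 0\<close> and \<open>a = 1\<close> are constant, and the columns are continuous by the symmetry
  \<open>J b a = 1 - J a b\<close>. Monotonicity in both variables upgrades this separate continuity to joint
  continuity: choosing \<open>b1\<close> slightly below \<open>b0\<close> and then \<open>a2\<close> slightly right of \<open>a0\<close>, every
  \<open>(a, b)\<close> near \<open>(a0, b0)\<close> satisfies \<open>J a b \<le> J a2 b \<le> J a2 b1 \<approx> J a0 b0\<close>. This gives upper
  semicontinuity, and the symmetry turns it into lower semicontinuity.
\<close>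

lemma continuous_on_mono_onto_interval:
  fixes f :: "real \<Rightarrow> real"
  assumes mono: "mono_on {a..b} f" and onto: "f ` {a..b} = {f a..f b}"
  shows "continuous_on {a..b} f"
proof (cases "a \<le> b")
  case True
  have bounds: "f a \<le> f x" "f x \<le> f b" if "x \<in> {a..b}" for x
    using that True by (auto intro!: mono_onD[OF mono])
  \<comment> \<open>an extension of \<open>f\<close> to a monotone map of \<open>\<real>\<close> onto the open set \<open>\<real>\<close>\<close>
  define g where "g x = (if x < a then f a + (x - a) else if b < x then f b + (x - b) else f x)" for x
  have "mono g"
  proof (rule monoI)
    fix x y :: real
    assume "x \<le> y"
    then show "g x \<le> g y"
      using True bounds[of x] bounds[of y] bounds[of a] bounds[of b]
      by (auto simp: g_def intro: mono_onD[OF mono])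
  qed
  have "range g = UNIV"
  proof -
    have "y \<in> range g" for y
    proof -
      consider "y < f a" | "f b < y" | "y \<in> {f a..f b}" by force
      then show ?thesis
      proof cases
        case 1
        then show ?thesis using True by (intro image_eqI[of _ _ "a + (y - f a)"]) (auto simp: g_def)
      next
        case 2
        then show ?thesis using True bounds[of a]
          by (intro image_eqI[of _ _ "b + (y - f b)"]) (auto simp: g_def)
      next
        case 3
        then obtain x where "x \<in> {a..b}" "y = f x" using onto by blast
        then show ?thesis by (intro image_eqI[of _ _ x]) (auto simp: g_def)
      qed
    qed
    then show ?thesis by blast
  qed
  then have "continuous_on UNIV g"
    using \<open>mono g\<close> by (intro continuous_onI_mono) (auto dest: monoD)
  then have "continuous_on {a..b} g" by (rule continuous_on_subset) simp
  then show ?thesis by (rule continuous_on_cong[THEN iffD1, rotated 2]) (auto simp: g_def)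
qed simp

lemma continuous_on_near_left:
  fixes f :: "real \<Rightarrow> real"
  assumes "continuous_on S f" "x \<in> S" "{c<..<x} \<subseteq> S" "c < x" "e > 0"
  shows "\<exists>y\<in>{c<..<x}. dist (f y) (f x) < e"
proof -
  obtain d where "d > 0" and d: "\<And>y. y \<in> S \<Longrightarrow> dist y x < d \<Longrightarrow> dist (f y) (f x) < e"
    using assms(1,2,5) unfolding continuous_on_iff by blast
  define y where "y = max (x - d / 2) ((c + x) / 2)"
  have "y \<in> {c<..<x}" "dist y x < d"
    using \<open>d > 0\<close> \<open>c < x\<close> by (auto simp: y_def dist_real_def less_max_iff_disj)
  then show ?thesis using d assms(3) by blast
qed

lemma continuous_on_near_right:
  fixes f :: "real \<Rightarrow> real"
  assumes "continuous_on S f" "x \<in> S" "{x<..<c} \<subseteq> S" "x < c" "e > 0"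
  shows "\<exists>y\<in>{x<..<c}. dist (f y) (f x) < e"
proof -
  obtain d where "d > 0" and d: "\<And>y. y \<in> S \<Longrightarrow> dist y x < d \<Longrightarrow> dist (f y) (f x) < e"
    using assms(1,2,5) unfolding continuous_on_iff by blast
  define y where "y = min (x + d / 2) ((x + c) / 2)"
  have "y \<in> {x<..<c}" "dist y x < d"
    using \<open>d > 0\<close> \<open>x < c\<close> by (auto simp: y_def dist_real_def min_less_iff_disj)
  then show ?thesis using d assms(3) by blast
qed

lemma mem_jdom_iff:
  "(a, b) \<in> jdom \<longleftrightarrow> a \<in> {0..1} \<and> b \<in> {0..1} \<and> (a, b) \<noteq> (0, 0) \<and> (a, b) \<noteq> (1, 1)"
  by (auto simp: jdom_def)

lemma jdom_swap_iff: "(b, a) \<in> jdom \<longleftrightarrow> (a, b) \<in> jdom"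
  by (auto simp: mem_jdom_iff)

locale jamesian_function =
  fixes J :: "real \<Rightarrow> real \<Rightarrow> real"
  assumes jamesian: "jamesian J"
begin

lemma J_swap: "(a, b) \<in> jdom \<Longrightarrow> J b a = 1 - J a b"
  using jamesian unfolding jamesian_def by blast

lemma J_reflect: "(a, b) \<in> jdom \<Longrightarrow> J (1 - b) (1 - a) = J a b"
  using jamesian unfolding jamesian_def by blast

lemma J_zero_right: "0 < a \<Longrightarrow> a \<le> 1 \<Longrightarrow> J a 0 = 1"
  using jamesian[unfolded jamesian_def] mem_jdom_iff[of a "1/2"] by auto

lemma J_zero_left: "0 < b \<Longrightarrow> b \<le> 1 \<Longrightarrow> J 0 b = 0"
  using J_swap[of b 0] J_zero_right[of b] by (simp add: mem_jdom_iff)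

lemma J_one_left: "0 \<le> b \<Longrightarrow> b < 1 \<Longrightarrow> J 1 b = 1"
  using J_reflect[of "1 - b" 0] J_zero_right[of "1 - b"] by (simp add: mem_jdom_iff)

lemma J_one_right: "0 \<le> a \<Longrightarrow> a < 1 \<Longrightarrow> J a 1 = 0"
  using J_swap[of 1 a] J_one_left[of a] by (simp add: mem_jdom_iff)

lemma J_mono_left:
  assumes "(x, b) \<in> jdom" "(y, b) \<in> jdom" "x \<le> y"
  shows "J x b \<le> J y b"
proof -
  have "mono_on {a. (a, b) \<in> jdom} (\<lambda>a. J a b)"
    using jamesian assms(1) unfolding jamesian_def by (auto simp: mem_jdom_iff)
  then show ?thesis using assms by (auto dest: mono_onD)
qed

lemma J_antimono_right:
  assumes "(a, x) \<in> jdom" "(a, y) \<in> jdom" "x \<le> y"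
  shows "J a y \<le> J a x"
proof -
  have "J x a \<le> J y a"
    using assms by (intro J_mono_left) (auto simp: jdom_swap_iff)
  then show ?thesis using J_swap[OF assms(1)] J_swap[OF assms(2)] by simp
qed

lemma J_le_one:
  assumes "(a, b) \<in> jdom"
  shows "J a b \<le> 1"
proof (cases "b = 1")
  case True
  then show ?thesis using assms J_one_right[of a] by (auto simp: mem_jdom_iff)
next
  case False
  then have "J a b \<le> J 1 b" using assms by (intro J_mono_left) (auto simp: mem_jdom_iff)
  then show ?thesis using J_one_left[of b] assms False by (auto simp: mem_jdom_iff)
qed

lemma J_nonneg: "(a, b) \<in> jdom \<Longrightarrow> 0 \<le> J a b"
  using J_le_one[of b a] J_swap[of a b] by (simp add: jdom_swap_iff)

end

locale involutive_jamesian_function =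
  fixes J :: "real \<Rightarrow> real \<Rightarrow> real"
  assumes involutive_jamesian: "involutive_jamesian J"
begin

sublocale jamesian_function J
  using involutive_jamesian by unfold_locales (simp add: involutive_jamesian_def)

lemma J_involution: "0 < a \<Longrightarrow> a < 1 \<Longrightarrow> b \<in> {0..1} \<Longrightarrow> J a (J a b) = b"
  using involutive_jamesian by (simp add: involutive_jamesian_def)

lemma J_row_image:
  assumes "0 < a" "a < 1"
  shows "J a ` {0..1} = {0..1}"
proof
  show "J a ` {0..1} \<subseteq> {0..1}"
    using assms J_nonneg[of a] J_le_one[of a] by (auto simp: mem_jdom_iff)
  show "{0..1} \<subseteq> J a ` {0..1}"
  proof
    fix b :: real
    assume b: "b \<in> {0..1}"
    then have "J a b \<in> {0..1}"
      using assms J_nonneg[of a b] J_le_one[of a b] by (auto simp: mem_jdom_iff)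
    then show "b \<in> J a ` {0..1}" using J_involution[OF assms b] by force
  qed
qed

lemma continuous_on_J_row_interval:
  assumes "0 < a" "a < 1"
  shows "continuous_on {0..1} (J a)"
proof -
  have "mono_on {0..1} (\<lambda>b. - J a b)"
    using assms by (intro mono_onI) (auto intro!: J_antimono_right simp: mem_jdom_iff)
  moreover have "(\<lambda>b. - J a b) ` {0..1} = {- J a 0..- J a 1}"
  proof -
    have "(\<lambda>b. - J a b) ` {0..1} = uminus ` J a ` {0..1}" by (simp add: image_image)
    then show ?thesis using J_row_image[OF assms] J_zero_right[of a] J_one_right[of a] assms by simp
  qed
  ultimately have "continuous_on {0..1} (\<lambda>b. - (- J a b))"
    by (intro continuous_on_minus continuous_on_mono_onto_interval)
  then show ?thesis by simp
qed

lemma continuous_on_J_row: "continuous_on {b. (a, b) \<in> jdom} (J a)"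
proof -
  consider "a = 0" | "a = 1" | "0 < a \<and> a < 1" | "a \<notin> {0..1}" by force
  then show ?thesis
  proof cases
    case 1
    then have "continuous_on {b. (a, b) \<in> jdom} (\<lambda>_. 0)" by simp
    then show ?thesis
      by (rule continuous_on_cong[THEN iffD1, rotated 2]) (auto simp: 1 mem_jdom_iff J_zero_left)
  next
    case 2
    then have "continuous_on {b. (a, b) \<in> jdom} (\<lambda>_. 1)" by simp
    then show ?thesis
      by (rule continuous_on_cong[THEN iffD1, rotated 2]) (auto simp: 2 mem_jdom_iff J_one_left)
  next
    case 3
    then have "continuous_on {0..1} (J a)" by (simp add: continuous_on_J_row_interval)
    then show ?thesis by (rule continuous_on_subset) (auto simp: mem_jdom_iff)
  next
    case 4
    then have "{b. (a, b) \<in> jdom} = {}" by (auto simp: mem_jdom_iff)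
    then show ?thesis by simp
  qed
qed

lemma continuous_on_J_column: "continuous_on {a. (a, b) \<in> jdom} (\<lambda>a. J a b)"
proof -
  have "continuous_on {a. (b, a) \<in> jdom} (\<lambda>a. 1 - J b a)"
    by (intro continuous_on_diff continuous_on_const continuous_on_J_row)
  then show ?thesis
    by (rule continuous_on_cong[THEN iffD1, rotated 2]) (auto simp: jdom_swap_iff dest!: J_swap)
qed

lemma J_upper_semicontinuous:
  assumes "(a0, b0) \<in> jdom" "e > 0"
  shows "\<exists>d>0. \<forall>a b. (a, b) \<in> jdom \<longrightarrow> dist (a, b) (a0, b0) < d \<longrightarrow> J a b < J a0 b0 + e"
proof (cases "a0 = 1 \<or> b0 = 0")
  case True
  then have "J a0 b0 = 1"
    using assms(1) J_one_left[of b0] J_zero_right[of a0] by (auto simp: mem_jdom_iff)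
  then show ?thesis using J_le_one \<open>e > 0\<close> by (intro exI[of _ 1]) force
next
  case False
  then have a0: "0 \<le> a0" "a0 < 1" and b0: "0 < b0" "b0 \<le> 1"
    using assms(1) by (auto simp: mem_jdom_iff)
  have "{0<..<b0} \<subseteq> {b. (a0, b) \<in> jdom}" using a0 b0 by (auto simp: mem_jdom_iff)
  then obtain b1 where b1: "b1 \<in> {0<..<b0}" "dist (J a0 b1) (J a0 b0) < e / 2"
    using continuous_on_near_left[OF continuous_on_J_row] assms b0 by (metis half_gt_zero mem_Collect_eq)
  have "{a0<..<1} \<subseteq> {a. (a, b1) \<in> jdom}" "(a0, b1) \<in> jdom"
    using a0 b0 b1 by (auto simp: mem_jdom_iff)
  then obtain a2 where a2: "a2 \<in> {a0<..<1}" "dist (J a2 b1) (J a0 b1) < e / 2"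
    using continuous_on_near_right[OF continuous_on_J_column] a0 assms by (metis half_gt_zero mem_Collect_eq)
  show ?thesis
  proof (intro exI[of _ "min (a2 - a0) (b0 - b1)"] conjI allI impI)
    show "0 < min (a2 - a0) (b0 - b1)" using a2 b1 by simp
    fix a b assume ab: "(a, b) \<in> jdom" "dist (a, b) (a0, b0) < min (a2 - a0) (b0 - b1)"
    then have "a < a2" "b1 < b"
      using dist_fst_le[of "(a, b)" "(a0, b0)"] dist_snd_le[of "(a, b)" "(a0, b0)"]
      by (auto simp: dist_real_def)
    have "J a b \<le> J a2 b"
      using ab \<open>a < a2\<close> a0 a2 by (intro J_mono_left) (auto simp: mem_jdom_iff)
    also have "\<dots> \<le> J a2 b1"
      using ab \<open>b1 < b\<close> a0 a2 b1 b0 by (intro J_antimono_right) (auto simp: mem_jdom_iff)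
    finally show "J a b < J a0 b0 + e"
      using a2(2) b1(2) unfolding dist_real_def by arith
  qed
qed

lemma J_lower_semicontinuous:
  assumes "(a0, b0) \<in> jdom" "e > 0"
  shows "\<exists>d>0. \<forall>a b. (a, b) \<in> jdom \<longrightarrow> dist (a, b) (a0, b0) < d \<longrightarrow> J a0 b0 - e < J a b"
proof -
  obtain d where "d > 0"
    and d: "\<And>a b. (a, b) \<in> jdom \<Longrightarrow> dist (a, b) (b0, a0) < d \<Longrightarrow> J a b < J b0 a0 + e"
    using J_upper_semicontinuous[of b0 a0 e] assms by (auto simp: jdom_swap_iff)
  have "J a0 b0 - e < J a b" if "(a, b) \<in> jdom" "dist (a, b) (a0, b0) < d" for a b
    using d[of b a] that J_swap[OF that(1)] J_swap[OF assms(1)]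
    by (simp add: jdom_swap_iff dist_Pair_Pair add.commute)
  then show ?thesis using \<open>d > 0\<close> by blast
qed

lemma continuous_on_J: "continuous_on jdom (\<lambda>(a, b). J a b)"
  unfolding continuous_on_iff
proof (intro ballI allI impI)
  fix x and e :: real
  assume "x \<in> jdom" "e > 0"
  then obtain a0 b0 where x: "x = (a0, b0)" "(a0, b0) \<in> jdom" by (cases x) auto
  obtain d1 d2 where "d1 > 0" "d2 > 0"
    and "\<forall>a b. (a, b) \<in> jdom \<longrightarrow> dist (a, b) (a0, b0) < d1 \<longrightarrow> J a b < J a0 b0 + e"
    and "\<forall>a b. (a, b) \<in> jdom \<longrightarrow> dist (a, b) (a0, b0) < d2 \<longrightarrow> J a0 b0 - e < J a b"
    using J_upper_semicontinuous[OF x(2) \<open>e > 0\<close>] J_lower_semicontinuous[OF x(2) \<open>e > 0\<close>]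
    by blast
  then have "\<forall>y\<in>jdom. dist y x < min d1 d2 \<longrightarrow> dist (case y of (a, b) \<Rightarrow> J a b) (J a0 b0) < e"
    by (force simp: x dist_real_def abs_less_iff)
  then show "\<exists>d>0. \<forall>y\<in>jdom. dist y x < d \<longrightarrow> dist ((\<lambda>(a, b). J a b) y) ((\<lambda>(a, b). J a b) x) < e"
    using \<open>d1 > 0\<close> \<open>d2 > 0\<close> by (intro exI[of _ "min d1 d2"]) (simp add: x)
qed

end

theorem proposition5p2:
  fixes J :: "real \<Rightarrow> real \<Rightarrow> real"
  assumes "involutive_jamesian J"
  shows "continuous_on jdom (\<lambda>(a, b). J a b)"
proof -
  interpret involutive_jamesian_function J
    using assms by unfold_locales
  show ?thesis by (fact continuous_on_J)
qed

end
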